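(* In the linear setting of the context, let $(\mathbf c(t),v(t),\phi(t))$ be a solution of the linear pump-leak system. Then $$\frac{d\tilde G}{dt}=-J,\qquad J=\langle\boldsymbol\mu+\mathbf q,L(\boldsymbol\mu+\mathbf q)\rangle_{\mathbb R^N}+\zeta\pi_{\rm w}^2=\langle\boldsymbol\gamma+\mathbf q,\hat L(\boldsymbol\gamma+\mathbf q)\rangle_{\mathbb R^N}+\zeta\pi_{\rm w}^2,$$ where $$\tilde G(\mathbf c,v)=v\sum_{k=1}^N\Big(c_k\big(\ln(c_k/c_k^{\rm e})-1+q_k\big)+c_k^{\rm e}\Big)+A\Big(\ln\frac{A}{v}-1\Big).$$ In particular $\tilde G$ is non-increasing along solutions.
   Context: Fix an integer $N\ge2$, real valences $z_1,\dots,z_N$ not all zero, $\mathbf z=(z_1,\dots,z_N)^T$, positive constants $c_k^{\rm e}$ with $\sum_kz_kc_k^{\rm e}=0$, $A>0$, $z\in\mathbb R$. Let $L$ be a real symmetric positive definite $N\times N$ matrix, $\mathbf p\in\mathbb R^N$ constant, $\zeta>0$, $\mathbf q=L^{-1}\mathbf p$. For $\mathbf c\in(0,\infty)^N$, $v>0$, $\phi\in\mathbb R$: $\gamma_k=\ln(c_k/c_k^{\rm e})$, $\boldsymbol\gamma=(\gamma_k)$, $\mu_k=\gamma_k+z_k\phi$, $\pi_{\rm w}=\sum_kc_k^{\rm e}-(\sum_kc_k+A/v)$. The linear pump-leak system is $\frac{d}{dt}(v\mathbf c)=-L\boldsymbol\mu-\mathbf p$, $0=\sum_kz_kc_k+zA/v$,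 $\frac{dv}{dt}=-\zeta\pi_{\rm w}$; a solution is a triple with $\mathbf c(t)\in(0,\infty)^N$, $v(t)>0$ of class $C^1$ and $\phi(t)$ continuous satisfying these equations. $\hat L$ is the $N\times N$ matrix $\hat L=L-\frac{(L\mathbf z)(L\mathbf z)^T}{\langle\mathbf z,L\mathbf z\rangle}$. (Along solutions, the electroneutrality constraint forces $\phi=-\langle\mathbf z,L\boldsymbol\gamma+\mathbf p\rangle/\langle\mathbf z,L\mathbf z\rangle$.) *)

theory Defs
  imports "HOL-Analysis.Analysis"
begin

text \<open>Linear pump-leak system. Vectors in R^N are modelled as real^'n with N = CARD('n).\<close>

definition gam :: "real^'n \<Rightarrow> real^'n \<Rightarrow> real^'n" where
  "gam ce c = (\<chi> k. ln (c $ k / ce $ k))"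

definition chempot :: "real^'n \<Rightarrow> real^'n \<Rightarrow> real^'n \<Rightarrow> real \<Rightarrow> real^'n" where
  "chempot ce zv c phi = gam ce c + phi *\<^sub>R zv"

definition piw :: "real^'n \<Rightarrow> real \<Rightarrow> real^'n \<Rightarrow> real \<Rightarrow> real" where
  "piw ce A c v = (\<Sum>k\<in>UNIV. ce $ k) - ((\<Sum>k\<in>UNIV. c $ k) + A / v)"

definition Lhat :: "real^'n^'n \<Rightarrow> real^'n \<Rightarrow> real^'n^'n" where
  "Lhat L zv = L - (1 / (zv \<bullet> (L *v zv))) *\<^sub>R (\<chi> i j. (L *v zv) $ i * (L *v zv) $ j)"

definition Gtilde :: "real^'n \<Rightarrow> real \<Rightarrow> real^'n \<Rightarrow> real^'n \<Rightarrow> real \<Rightarrow> real" where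
  "Gtilde ce A q c v =
     v * (\<Sum>k\<in>UNIV. c $ k * (ln (c $ k / ce $ k) - 1 + q $ k) + ce $ k) + A * (ln (A / v) - 1)"

end

theory Submission imports Defs begin

(*
  Writing m = mu + q and n = d(v c)/dt = -L m, the proof has three ingredients.
  (1) Chain rule: by differentiating Gtilde and expressing dc/dt through d(vc)/dt
      and dv/dt, one gets  dGtilde/dt = piw * dv/dt + <gamma + q, d(vc)/dt>.
  (2) Electroneutrality: <z, v c> = -zA A is constant in time, so <z, n> = 0,
      i.e. <z, L m> = 0.
  (3) Linear algebra: since gamma + q = m - phi z and <z, L m> = 0, the pairing
      <gamma + q, n> equals -<m, L m>, and the quadratic form of Lhat at
      m - phi z equals <m, L m>.
  Combining (1)-(3) with dv/dt = -zeta piw gives dGtilde/dt = -J with both forms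
  of J.  Positive definiteness of L makes J >= 0, and the mean value theorem on
  the interval T yields monotonicity.
*)

lemma symmetric_matrix_inner_commute:
  fixes L :: "real^'n^'n"
  assumes "transpose L = L"
  shows "x \<bullet> (L *v y) = y \<bullet> (L *v x)"
proof -
  have "x \<bullet> (L *v y) = (x v* L) \<bullet> y" by (simp add: dot_lmul_matrix)
  also have "x v* L = L *v x" by (metis assms vector_transpose_matrix)
  finally show ?thesis by (simp add: inner_commute)
qed

lemma outer_product_mult_vector:
  fixes a x :: "real^'n"
  shows "(\<chi> i j. a$i * a$j) *v x = (a \<bullet> x) *\<^sub>R a"
  by (simp add: vec_eq_iff matrix_vector_mult_def inner_vec_def sum_distrib_left
      sum_distrib_right algebra_simps)

lemma Lhat_quadratic_form:
  fixes L :: "real^'n^'n"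
  shows "x \<bullet> (Lhat L z *v x) = x \<bullet> (L *v x) - ((L *v z) \<bullet> x)\<^sup>2 / (z \<bullet> (L *v z))"
  unfolding Lhat_def
  by (simp add: matrix_vector_mult_diff_rdistrib scaleR_matrix_vector_assoc[symmetric]
      outer_product_mult_vector inner_diff_right power2_eq_square inner_commute)

text \<open>Lhat does not see a shift along z of a vector m that is L-orthogonal to z:
  this is why the two forms of the dissipation rate J agree.\<close>
lemma Lhat_quadratic_form_shift:
  fixes L :: "real^'n^'n" and z m :: "real^'n"
  assumes L_sym: "transpose L = L"
    and z_nondeg: "z \<bullet> (L *v z) \<noteq> 0"
    and orth: "z \<bullet> (L *v m) = 0"
  shows "(m - a *\<^sub>R z) \<bullet> (Lhat L z *v (m - a *\<^sub>R z)) = m \<bullet> (L *v m)"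
proof -
  define d where "d = z \<bullet> (L *v z)"
  have orth': "m \<bullet> (L *v z) = 0"
    using orth symmetric_matrix_inner_commute[OF L_sym] by metis
  have cross: "(L *v z) \<bullet> (m - a *\<^sub>R z) = - a * d"
    using orth' unfolding d_def by (simp add: inner_diff_right inner_commute)
  have quad: "(m - a *\<^sub>R z) \<bullet> (L *v (m - a *\<^sub>R z)) = m \<bullet> (L *v m) + a\<^sup>2 * d"
    using orth orth' unfolding d_def
    by (simp add: matrix_vector_mult_diff_distrib matrix_vector_mult_scaleR inner_diff_right
        inner_diff_left power2_eq_square)
  show ?thesis
    unfolding Lhat_quadratic_form cross quad using z_nondeg unfolding d_def[symmetric]
    by (simp add: power2_eq_square field_simps)
qed

lemma pos_def_matrix_inv_right:
  fixes L :: "real^'n^'n"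
  assumes "\<forall>x. x \<noteq> 0 \<longrightarrow> x \<bullet> (L *v x) > 0"
  shows "L *v (matrix_inv L *v p) = p"
proof -
  have "\<forall>x. L *v x = 0 \<longrightarrow> x = 0" using assms by force
  then have "invertible L"
    using matrix_left_invertible_ker invertible_left_inverse by blast
  then have "L ** matrix_inv L = mat 1"
    unfolding invertible_def matrix_inv_def
    by (rule someI_ex[where P="\<lambda>A'. L ** A' = mat 1 \<and> A' ** L = mat 1", THEN conjunct1])
  then show ?thesis by (simp add: matrix_vector_mul_assoc)
qed

lemma component_derivative_from_amount:
  fixes c :: "real \<Rightarrow> real^'n" and v :: "real \<Rightarrow> real"
  assumes T_open: "open T" and tT: "t \<in> T" and v_nz: "\<forall>s\<in>T. v s \<noteq> 0"
    and amount: "((\<lambda>s. v s *\<^sub>R c s) has_vector_derivative n) (at t)"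
    and vol: "(v has_real_derivative v') (at t)"
  shows "((\<lambda>s. c s $ k) has_real_derivative (n $ k - c t $ k * v') / v t) (at t)"
proof -
  have vt: "v t \<noteq> 0" using v_nz tT by blast
  have "((\<lambda>s. v s * c s $ k) has_real_derivative n $ k) (at t)"
    using bounded_linear.has_vector_derivative[OF bounded_linear_vec_nth amount, of k]
    by (simp add: has_real_derivative_iff_has_vector_derivative)
  from DERIV_divide[OF this vol] vt
  have "((\<lambda>s. (v s * c s $ k) / v s) has_real_derivative
      (n $ k * v t - (v t * c t $ k) * v') / (v t * v t)) (at t)"
    by simp
  moreover have "(n $ k * v t - (v t * c t $ k) * v') / (v t * v t) = (n $ k - c t $ k * v') / v t"
    using vt by (simp add: field_simps)
  ultimately have "((\<lambda>s. (v s * c s $ k) / v s) has_real_derivative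
      (n $ k - c t $ k * v') / v t) (at t)" by simp
  then show ?thesis
    by (rule has_field_derivative_transform_within_open[OF _ T_open tT]) (use v_nz in force)
qed

text \<open>Electroneutrality makes the total charge <z, v c> = -zA A constant, so the
  flux of amounts is orthogonal to z.\<close>
lemma electroneutral_flux_orthogonal:
  fixes c :: "real \<Rightarrow> real^'n" and v :: "real \<Rightarrow> real"
  assumes T_open: "open T" and tT: "t \<in> T" and v_nz: "\<forall>s\<in>T. v s \<noteq> 0"
    and neutral: "\<forall>s\<in>T. z \<bullet> c s + zA * A / v s = 0"
    and amount: "((\<lambda>s. v s *\<^sub>R c s) has_vector_derivative n) (at t)"
  shows "z \<bullet> n = 0"
proof -
  have charge: "((\<lambda>s. z \<bullet> (v s *\<^sub>R c s)) has_vector_derivative z \<bullet> n) (at t)"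
    using bounded_linear.has_vector_derivative[OF bounded_linear_inner_right amount] .
  have "((\<lambda>s. - zA * A) has_real_derivative z \<bullet> n) (at t)"
    unfolding has_real_derivative_iff_has_vector_derivative
  proof (rule has_vector_derivative_transform_within_open[OF charge T_open tT])
    fix s assume "s \<in> T"
    with neutral v_nz have "z \<bullet> c s + zA * A / v s = 0" "v s \<noteq> 0" by auto
    then show "z \<bullet> (v s *\<^sub>R c s) = - zA * A" by (simp add: field_simps)
  qed
  then show ?thesis using DERIV_const DERIV_unique by blast
qed

lemma Gtilde_has_derivative:
  fixes c :: "real \<Rightarrow> real^'n" and v :: "real \<Rightarrow> real" and ce q c' :: "real^'n"
  assumes conc: "\<And>k. ((\<lambda>s. c s $ k) has_real_derivative c' $ k) (at t)"
    and vol: "(v has_real_derivative v') (at t)"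
    and c_pos: "\<And>k. c t $ k > 0" and v_pos: "v t > 0"
    and ce_pos: "\<And>k. ce $ k > 0" and A_pos: "A > 0"
  shows "((\<lambda>s. Gtilde ce A q (c s) (v s)) has_real_derivative
     v' * (\<Sum>k\<in>UNIV. c t $ k * (ln (c t $ k / ce $ k) - 1 + q $ k) + ce $ k)
     + v t * (\<Sum>k\<in>UNIV. (ln (c t $ k / ce $ k) + q $ k) * c' $ k) - A * v' / v t) (at t)"
proof -
  have nz: "\<And>k. ce $ k \<noteq> 0" "\<And>k. c t $ k \<noteq> 0" using ce_pos c_pos by (metis less_irrefl)+
  have vA: "v t \<noteq> 0" "0 < A / v t" using v_pos A_pos by auto
  have ratio_pos: "\<And>k. 0 < c t $ k / ce $ k" using ce_pos c_pos by simp
  have collect: "(\<Sum>k\<in>UNIV. c' $ k * (ln (c t $ k / ce $ k) - 1 + q $ k) + c' $ k) =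
      (\<Sum>k\<in>UNIV. (ln (c t $ k / ce $ k) + q $ k) * c' $ k)"
    by (rule sum.cong) (auto simp: algebra_simps)
  show ?thesis
    unfolding Gtilde_def
    by (rule derivative_eq_intros conc vol refl
        | simp add: nz ratio_pos vA collect mult.commute)+
qed

lemma Gtilde_flux_derivative:
  fixes c :: "real \<Rightarrow> real^'n" and v :: "real \<Rightarrow> real" and ce q :: "real^'n"
  assumes T_open: "open T" and tT: "t \<in> T" and v_pos: "\<forall>s\<in>T. v s > 0"
    and c_pos: "\<And>k. c t $ k > 0" and ce_pos: "\<And>k. ce $ k > 0" and A_pos: "A > 0"
    and amount: "((\<lambda>s. v s *\<^sub>R c s) has_vector_derivative n) (at t)"
    and vol: "(v has_real_derivative v') (at t)"
  shows "((\<lambda>s. Gtilde ce A q (c s) (v s)) has_real_derivative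
           v' * piw ce A (c t) (v t) + (gam ce (c t) + q) \<bullet> n) (at t)"
proof -
  define c' where "c' = (\<chi> k. (n $ k - c t $ k * v') / v t)"
  define w where "w k = ln (c t $ k / ce $ k) + q $ k" for k
  have vt: "v t > 0" using v_pos tT by blast
  have conc: "((\<lambda>s. c s $ k) has_real_derivative c' $ k) (at t)" for k
    unfolding c'_def using component_derivative_from_amount[OF T_open tT _ amount vol] v_pos
    by force
  have flux_part: "v t * (\<Sum>k\<in>UNIV. w k * c' $ k)
      = (\<Sum>k\<in>UNIV. w k * n $ k) - v' * (\<Sum>k\<in>UNIV. w k * c t $ k)"
    unfolding sum_distrib_left sum_subtractf[symmetric] c'_def
    by (rule sum.cong) (use vt in \<open>auto simp: field_simps\<close>)
  have energy_density: "(\<Sum>k\<in>UNIV. c t $ k * (ln (c t $ k / ce $ k) - 1 + q $ k) + ce $ k)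
      = (\<Sum>k\<in>UNIV. w k * c t $ k) - (\<Sum>k\<in>UNIV. c t $ k) + (\<Sum>k\<in>UNIV. ce $ k)"
    unfolding w_def sum_subtractf[symmetric] sum.distrib[symmetric]
    by (rule sum.cong) (auto simp: algebra_simps)
  have pairing: "(gam ce (c t) + q) \<bullet> n = (\<Sum>k\<in>UNIV. w k * n $ k)"
    unfolding gam_def inner_vec_def w_def by simp
  have "v' * (\<Sum>k\<in>UNIV. c t $ k * (ln (c t $ k / ce $ k) - 1 + q $ k) + ce $ k)
      + v t * (\<Sum>k\<in>UNIV. w k * c' $ k) - A * v' / v t
      = v' * piw ce A (c t) (v t) + (gam ce (c t) + q) \<bullet> n"
    unfolding flux_part energy_density pairing piw_def by (simp add: algebra_simps)
  with Gtilde_has_derivative[OF conc vol c_pos vt ce_pos A_pos, of q]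
  show ?thesis unfolding w_def by simp
qed

lemma nonpos_derivative_imp_nonincreasing_on:
  fixes f :: "real \<Rightarrow> real"
  assumes T_int: "is_interval T"
    and deriv: "\<And>t. t \<in> T \<Longrightarrow> \<exists>D. (f has_real_derivative D) (at t) \<and> D \<le> 0"
    and "s \<in> T" "t \<in> T" "s \<le> t"
  shows "f t \<le> f s"
proof (rule DERIV_nonpos_imp_nonincreasing[OF \<open>s \<le> t\<close>])
  fix x assume "s \<le> x" "x \<le> t"
  with assms(3,4) T_int have "x \<in> T" unfolding is_interval_1 by blast
  then show "\<exists>y. (f has_real_derivative y) (at x) \<and> y \<le> 0" by (rule deriv)
qed

lemma free_energy_dissipation_at:
  fixes zv ce q :: "real^'n" and L :: "real^'n^'n"
    and c :: "real \<Rightarrow> real^'n" and v phi :: "real \<Rightarrow> real"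
  assumes L_sym: "transpose L = L" and z_nondeg: "zv \<bullet> (L *v zv) \<noteq> 0"
    and ce_pos: "\<forall>k. ce $ k > 0" and A_pos: "A > 0"
    and T_open: "open T" and tT: "t \<in> T"
    and c_pos: "\<forall>k. c t $ k > 0" and v_pos: "\<forall>s\<in>T. v s > 0"
    and eq_c: "((\<lambda>s. v s *\<^sub>R c s) has_vector_derivative
                 - (L *v (chempot ce zv (c t) (phi t) + q))) (at t)"
    and eq_en: "\<forall>s\<in>T. zv \<bullet> c s + zA * A / v s = 0"
    and eq_v: "(v has_real_derivative (- zeta * piw ce A (c t) (v t))) (at t)"
  defines "m \<equiv> chempot ce zv (c t) (phi t) + q"
    and "pw \<equiv> piw ce A (c t) (v t)"
  shows "((\<lambda>s. Gtilde ce A q (c s) (v s)) has_real_derivative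
            - (m \<bullet> (L *v m) + zeta * pw\<^sup>2)) (at t)"
    and "m \<bullet> (L *v m) = (gam ce (c t) + q) \<bullet> (Lhat L zv *v (gam ce (c t) + q))"
proof -
  have v_nz: "\<forall>s\<in>T. v s \<noteq> 0" using v_pos by force
  have orth: "zv \<bullet> (L *v m) = 0"
    using electroneutral_flux_orthogonal[OF T_open tT v_nz eq_en eq_c] unfolding m_def by simp
  have shift: "gam ce (c t) + q = m - phi t *\<^sub>R zv"
    unfolding m_def chempot_def by simp
  have "(gam ce (c t) + q) \<bullet> (- (L *v m)) = - (m \<bullet> (L *v m))"
    unfolding shift using orth by (simp add: inner_diff_left)
  moreover have "\<And>k. c t $ k > 0" "\<And>k. ce $ k > 0" using c_pos ce_pos by blast+
  note Gtilde_flux_derivative[OF T_open tT v_pos this A_pos eq_c eq_v]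
  ultimately show "((\<lambda>s. Gtilde ce A q (c s) (v s)) has_real_derivative
            - (m \<bullet> (L *v m) + zeta * pw\<^sup>2)) (at t)"
    unfolding m_def pw_def by (simp add: power2_eq_square algebra_simps)
  show "m \<bullet> (L *v m) = (gam ce (c t) + q) \<bullet> (Lhat L zv *v (gam ce (c t) + q))"
    unfolding shift using Lhat_quadratic_form_shift[OF L_sym z_nondeg orth] by simp
qed

theorem lemma3:
  fixes zv ce p :: "real^'n" and L :: "real^'n^'n"
    and A zA zeta :: real and T :: "real set"
    and c :: "real \<Rightarrow> real^'n" and v phi :: "real \<Rightarrow> real"
  assumes N2: "CARD('n) \<ge> 2"
    and zv_nz: "zv \<noteq> 0"
    and ce_pos: "\<forall>k. ce $ k > 0"
    and ce_neutral: "zv \<bullet> ce = 0"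
    and A_pos: "A > 0"
    and L_sym: "transpose L = L"
    and L_pd: "\<forall>x. x \<noteq> 0 \<longrightarrow> x \<bullet> (L *v x) > 0"
    and zeta_pos: "zeta > 0"
    and T_int: "is_interval T" and T_open: "open T"
    and c_pos: "\<forall>t\<in>T. \<forall>k. c t $ k > 0"
    and v_pos: "\<forall>t\<in>T. v t > 0"
    and c_C1: "c C1_differentiable_on T"
    and v_C1: "v C1_differentiable_on T"
    and phi_cont: "continuous_on T phi"
    and eq_c: "\<forall>t\<in>T. ((\<lambda>s. v s *\<^sub>R c s) has_vector_derivative
                   (- (L *v chempot ce zv (c t) (phi t)) - p)) (at t)"
    and eq_en: "\<forall>t\<in>T. zv \<bullet> c t + zA * A / v t = 0"
    and eq_v: "\<forall>t\<in>T. (v has_real_derivative (- zeta * piw ce A (c t) (v t))) (at t)"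
  shows "(\<forall>t\<in>T.
            let q = matrix_inv L *v p;
                mu = chempot ce zv (c t) (phi t);
                g = gam ce (c t);
                pw = piw ce A (c t) (v t);
                J = (mu + q) \<bullet> (L *v (mu + q)) + zeta * pw\<^sup>2
            in ((\<lambda>s. Gtilde ce A q (c s) (v s)) has_real_derivative (- J)) (at t)
               \<and> J = (g + q) \<bullet> (Lhat L zv *v (g + q)) + zeta * pw\<^sup>2)
         \<and> (\<forall>s\<in>T. \<forall>t\<in>T. s \<le> t \<longrightarrow>
               Gtilde ce A (matrix_inv L *v p) (c t) (v t)
                 \<le> Gtilde ce A (matrix_inv L *v p) (c s) (v s))"
proof -
  define q where "q = matrix_inv L *v p"
  define J where "J t = (chempot ce zv (c t) (phi t) + q)
      \<bullet> (L *v (chempot ce zv (c t) (phi t) + q)) + zeta * (piw ce A (c t) (v t))\<^sup>2" for t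
  have z_nondeg: "zv \<bullet> (L *v zv) \<noteq> 0" using L_pd zv_nz by force
  have flux: "- (L *v chempot ce zv (c t) (phi t)) - p
      = - (L *v (chempot ce zv (c t) (phi t) + q))" for t
    unfolding q_def by (simp add: matrix_vector_right_distrib pos_def_matrix_inv_right[OF L_pd])
  have at_t: "((\<lambda>s. Gtilde ce A q (c s) (v s)) has_real_derivative - J t) (at t)
      \<and> J t = (gam ce (c t) + q) \<bullet> (Lhat L zv *v (gam ce (c t) + q)) + zeta * (piw ce A (c t) (v t))\<^sup>2"
    if "t \<in> T" for t
  proof -
    have ct: "\<forall>k. c t $ k > 0" using c_pos that by blast
    have amount: "((\<lambda>s. v s *\<^sub>R c s) has_vector_derivative
        - (L *v (chempot ce zv (c t) (phi t) + q))) (at t)"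
      using eq_c that unfolding flux by blast
    have vol: "(v has_real_derivative (- zeta * piw ce A (c t) (v t))) (at t)"
      using eq_v that by blast
    note energy = free_energy_dissipation_at[where c=c and phi=phi,
        OF L_sym z_nondeg ce_pos A_pos T_open that ct v_pos amount eq_en vol]
    show ?thesis using energy unfolding J_def by simp
  qed
  have L_nonneg: "x \<bullet> (L *v x) \<ge> 0" for x
    using L_pd by (cases "x = 0") (auto simp: less_imp_le)
  have J_nonneg: "J t \<ge> 0" for t
    unfolding J_def using L_nonneg zeta_pos by simp
  have "Gtilde ce A q (c t) (v t) \<le> Gtilde ce A q (c s) (v s)"
    if "s \<in> T" "t \<in> T" "s \<le> t" for s t
    using nonpos_derivative_imp_nonincreasing_on[OF T_int _ that] at_t J_nonneg
    by (metis neg_le_0_iff_le)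
  with at_t show ?thesis unfolding Let_def q_def[symmetric] J_def by blast
qed

end
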